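(* In the option framework described in the context, let the terminations $\beta_o(s,\vartheta)$ be differentiable in $\vartheta$, write $\beta'_o(s',\vartheta)=1-\beta_o(s',\vartheta)+\pi_{\mathcal O}(s',o)\beta_o(s',\vartheta)$, and for a vector $\varphi$ define the compatible function approximator $h^{\beta_o}_\varphi(s')=\varphi^T\frac{\partial\ln\beta'_o(s',\vartheta)}{\partial\vartheta}$ and the squared error $$\epsilon(\varphi,\vartheta)=\sum_{s',o}\mu_{\mathcal O}(s',o)\,L_o(s';\vartheta)\,\big(h^{\beta_o}_\varphi(s')-a'_{\mathcal O}(s',o)\big)^2,\qquad L_o(s';\vartheta)=\frac{\beta'_o(s',\vartheta)}{1-\beta'_o(s',\vartheta)},$$ where it is assumed that $1-\beta'_o(s',\vartheta)\neq0$. Let $G_\vartheta=-\sum_{s',o}\mu_{\mathcal O}(s',o)\frac{\partial\ln\beta_o(s',\vartheta)}{\partial\vartheta}\big(\frac{\partial\ln\beta'_o(s',\vartheta)}{\partial\vartheta}\big)^T$ (assumed invertible). If $\tilde\varphi$ is a local minimum of $\epsilon(\cdot,\vartheta)$, then $$G_\vartheta^{-1}\frac{\partial u(o_0,s_1)}{\partial\vartheta}=-\tilde\varphi,$$ i.e. the natural gradient of the expected discounted return with respect to $\vartheta$ is $-\tilde\varphi$.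
   Context: Finite MDP with states $\mathcal S$, actions $\mathcal A$, transition function $P$, discount $\gamma$; finite option set $\mathcal O$ with intra-option policies $\pi_o(s,a)$, terminations $\beta_o(s,\vartheta)$ and a policy over options $\pi_{\mathcal O}(s,o)$; in state $s_t$ with option $o_t$ the agent draws $a_t\sim\pi_{o_t}(s_t,\cdot)$, moves to $s_{t+1}$, and $o_t$ terminates there with probability $\beta_{o_t}(s_{t+1},\vartheta)$, after which a new option is drawn from $\pi_{\mathcal O}(s_{t+1},\cdot)$ (so $\beta'_o(s',\vartheta)$ is the probability that $o$ is active when leaving $s'$ given $o$ was active on entering $s'$). Value functions (expected discounted returns): $v_{\pi_{\mathcal O}}(s)$ given $S_0=s$; $q_{\pi_{\mathcal O}}(s,o)$ given $S_0=s,O_0=o$; option-value upon arrival $u(o,s')$ given $O_0=o,S_1=s'$, satisfying $u(o,s')=(1-\beta_o(s'))q_{\pi_{\mathcal O}}(s',o)+\beta_o(s')v_{\pi_{\mathcal O}}(s')$. Advantages: $a_{\mathcal O}(s',o)=q_{\pi_{\mathcal O}}(s',o)-v_{\pi_{\mathcal O}}(s')$ and the advantage of continued option $a'_{\mathcal O}(s',o)=u(o,s')-q_{\pi_{\mathcal O}}(s',o)$. $\mu_{\mathcal O}(s',o)=\sum_{t\ge0}\gamma^t\Pr(S_{t+1}=s',O_t=o\mid s_1,o_0)$ is the discounted weighting of pairs from $(s_1,o_0)$ (treated as a stationary distribution). The gradient $\partial u(o_0,s_1)/\partial\vartheta$ is given by the termination gradient theorem: $\frac{\partial u(o_0,s_1)}{\partial\vartheta}=-\sum_{o,s'}\mu_{\mathcal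 O}(s',o)\frac{\partial\beta_o(s',\vartheta)}{\partial\vartheta}a_{\mathcal O}(s',o)$. *)

theory Defs
  imports "HOL-Analysis.Analysis"
begin

definition grad :: "('a::real_inner \<Rightarrow> real) \<Rightarrow> 'a \<Rightarrow> 'a" where
  "grad f x = (THE D. GDERIV f x :> D)"

definition outer :: "real ^ 'n \<Rightarrow> real ^ 'n \<Rightarrow> real ^ 'n ^ 'n" where
  "outer a b = (\<chi> i j. a $ i * b $ j)"

text \<open>beta'_o(s', theta) = 1 - beta_o(s',theta) + pi_O(s',w) beta_o(s',theta):
  probability that w is still active when leaving s'.\<close>
definition beta' :: "('o \<Rightarrow> 's \<Rightarrow> 'p \<Rightarrow> real) \<Rightarrow> ('s \<Rightarrow> 'o \<Rightarrow> real) \<Rightarrow> 'o \<Rightarrow> 's \<Rightarrow> 'p \<Rightarrow> real" where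
  "beta' \<beta> \<pi>O w s x = 1 - \<beta> w s x + \<pi>O s w * \<beta> w s x"

definition uval :: "('o \<Rightarrow> 's \<Rightarrow> 'p \<Rightarrow> real) \<Rightarrow> ('s \<Rightarrow> 'o \<Rightarrow> real) \<Rightarrow> ('s \<Rightarrow> real) \<Rightarrow> 'p \<Rightarrow> 'o \<Rightarrow> 's \<Rightarrow> real" where
  "uval \<beta> q v x w s = (1 - \<beta> w s x) * q s w + \<beta> w s x * v s"

definition adv :: "('s \<Rightarrow> 'o \<Rightarrow> real) \<Rightarrow> ('s \<Rightarrow> real) \<Rightarrow> 's \<Rightarrow> 'o \<Rightarrow> real" where
  "adv q v s w = q s w - v s"

definition adv' :: "('o \<Rightarrow> 's \<Rightarrow> 'p \<Rightarrow> real) \<Rightarrow> ('s \<Rightarrow> 'o \<Rightarrow> real) \<Rightarrow> ('s \<Rightarrow> real) \<Rightarrow> 'p \<Rightarrow> 's \<Rightarrow> 'o \<Rightarrow> real" where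
  "adv' \<beta> q v x s w = uval \<beta> q v x w s - q s w"

definition hcompat :: "('o \<Rightarrow> 's \<Rightarrow> real^'n \<Rightarrow> real) \<Rightarrow> ('s \<Rightarrow> 'o \<Rightarrow> real) \<Rightarrow> real^'n \<Rightarrow> real^'n \<Rightarrow> 'o \<Rightarrow> 's \<Rightarrow> real" where
  "hcompat \<beta> \<pi>O \<phi> x w s = \<phi> \<bullet> grad (\<lambda>y. ln (beta' \<beta> \<pi>O w s y)) x"

definition Lw :: "('o \<Rightarrow> 's \<Rightarrow> 'p \<Rightarrow> real) \<Rightarrow> ('s \<Rightarrow> 'o \<Rightarrow> real) \<Rightarrow> 'o \<Rightarrow> 's \<Rightarrow> 'p \<Rightarrow> real" where
  "Lw \<beta> \<pi>O w s x = beta' \<beta> \<pi>O w s x / (1 - beta' \<beta> \<pi>O w s x)"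

definition sqerr :: "('s::finite \<Rightarrow> 'o::finite \<Rightarrow> real) \<Rightarrow> ('o \<Rightarrow> 's \<Rightarrow> real^'n \<Rightarrow> real) \<Rightarrow> ('s \<Rightarrow> 'o \<Rightarrow> real)
    \<Rightarrow> ('s \<Rightarrow> 'o \<Rightarrow> real) \<Rightarrow> ('s \<Rightarrow> real) \<Rightarrow> real^'n \<Rightarrow> real^'n \<Rightarrow> real" where
  "sqerr \<mu> \<beta> \<pi>O q v \<phi> x =
     (\<Sum>s\<in>UNIV. \<Sum>w\<in>UNIV. \<mu> s w * Lw \<beta> \<pi>O w s x * (hcompat \<beta> \<pi>O \<phi> x w s - adv' \<beta> q v x s w)\<^sup>2)"

definition Gmat :: "('s::finite \<Rightarrow> 'o::finite \<Rightarrow> real) \<Rightarrow> ('o \<Rightarrow> 's \<Rightarrow> real^'n \<Rightarrow> real) \<Rightarrow> ('s \<Rightarrow> 'o \<Rightarrow> real)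
    \<Rightarrow> real^'n \<Rightarrow> real^'n^'n" where
  "Gmat \<mu> \<beta> \<pi>O x = - (\<Sum>s\<in>UNIV. \<Sum>w\<in>UNIV. \<mu> s w *\<^sub>R
      outer (grad (\<lambda>y. ln (\<beta> w s y)) x) (grad (\<lambda>y. ln (beta' \<beta> \<pi>O w s y)) x))"

end

theory Submission
  imports Defs
begin

(* The squared error is a weighted least-squares objective in phi, so at a local minimum its
   gradient vanishes: sum mu L (h_phi - a') d ln beta' = 0.  Since 1 - beta' = (1 - pi_O) beta,
   we have d ln beta' = -(1 - pi_O)/beta' d beta and hence L d ln beta' = - d ln beta; together
   with a' = - beta a_O every term of these normal equations becomes
   - mu (phi . d ln beta') d ln beta - mu a_O d beta.  Summed up this reads
   G phi + du/dtheta = 0 by the termination gradient theorem. *)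

lemma grad_eqI:
  fixes f :: "'a::real_inner \<Rightarrow> real"
  assumes "GDERIV f x :> D"
  shows "grad f x = D"
  unfolding grad_def
proof (rule the_equality)
  show "GDERIV f x :> D" by fact
  fix D' assume "GDERIV f x :> D'"
  then have "(\<lambda>h. h \<bullet> D') = (\<lambda>h. h \<bullet> D)"
    using assms unfolding gderiv_def by (metis has_derivative_unique)
  then have "(D' - D) \<bullet> (D' - D) = 0"
    by (metis inner_diff_right right_minus_eq)
  then show "D' = D" by simp
qed

lemma GDERIV_grad:
  fixes f :: "'a::euclidean_space \<Rightarrow> real"
  assumes "f differentiable (at x)"
  shows "GDERIV f x :> grad f x"
proof -
  obtain f' where f': "(f has_derivative f') (at x)"
    using assms differentiable_def by blast
  define D where "D = (\<Sum>i\<in>Basis. f' i *\<^sub>R i)"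
  have "f' h = h \<bullet> D" for h
  proof -
    have "f' h = f' (\<Sum>i\<in>Basis. (h \<bullet> i) *\<^sub>R i)"
      by (simp add: euclidean_representation)
    also have "\<dots> = (\<Sum>i\<in>Basis. (h \<bullet> i) * f' i)"
      using has_derivative_linear[OF f'] by (simp add: linear_sum linear_scale)
    also have "\<dots> = h \<bullet> D"
      unfolding D_def by (simp add: inner_sum_right mult.commute)
    finally show ?thesis .
  qed
  then have "GDERIV f x :> D"
    using f' unfolding gderiv_def by (metis ext)
  then show ?thesis by (simp add: grad_eqI)
qed

lemma GDERIV_sum:
  assumes "\<And>k. k \<in> K \<Longrightarrow> GDERIV (f k) x :> D k"
  shows "GDERIV (\<lambda>y. \<Sum>k\<in>K. f k y) x :> (\<Sum>k\<in>K. D k)"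
  using assms unfolding gderiv_def inner_sum_right by (rule has_derivative_sum)

lemma GDERIV_local_min_eq_0:
  assumes "GDERIV f x :> D" and "\<exists>e>0. \<forall>y. dist y x < e \<longrightarrow> f x \<le> f y"
  shows "D = 0"
proof -
  obtain e where "e > 0" and min: "\<forall>y. dist y x < e \<longrightarrow> f x \<le> f y"
    using assms(2) by blast
  have "(\<lambda>h. h \<bullet> D) = (\<lambda>h. 0)"
    by (rule differential_zero_maxmin[of x "ball x e"])
      (use \<open>e > 0\<close> min assms(1) in \<open>auto simp: gderiv_def dist_commute\<close>)
  then have "D \<bullet> D = 0" by metis
  then show ?thesis by simp
qed

lemma GDERIV_weighted_square:
  "GDERIV (\<lambda>\<psi>. c * (\<psi> \<bullet> g - a)\<^sup>2) \<phi> :> (2 * c * (\<phi> \<bullet> g - a)) *\<^sub>R g"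
  unfolding gderiv_def
  by (auto intro!: derivative_eq_intros simp: algebra_simps)

lemma grad_ln:
  assumes "GDERIV f x :> D" and "0 < f x"
  shows "grad (\<lambda>y. ln (f y)) x = inverse (f x) *\<^sub>R D"
  by (rule grad_eqI, rule GDERIV_DERIV_compose[OF assms(1) DERIV_ln[OF assms(2)]])

lemma matrix_vector_mult_sum_left:
  fixes A :: "'k \<Rightarrow> 'a::semiring_1^'n^'m"
  shows "(\<Sum>k\<in>K. A k) *v x = (\<Sum>k\<in>K. A k *v x)"
  by (induction K rule: infinite_finite_induct) (simp_all add: matrix_vector_mult_add_rdistrib)

lemma matrix_vector_mult_neg_left:
  fixes A :: "'a::ring_1^'n^'m"
  shows "(- A) *v x = - (A *v x)"
  by (simp add: matrix_vector_mult_def vec_eq_iff sum_negf)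

lemma outer_matrix_vector_mult:
  "(c *\<^sub>R outer a b) *v x = (c * (b \<bullet> x)) *\<^sub>R a"
  by (simp add: vec_eq_iff matrix_vector_mult_def outer_def inner_vec_def sum_distrib_left algebra_simps)

lemma matrix_inv_mult_vec_eqI:
  fixes A :: "real^'n^'n"
  assumes "invertible A" and "A *v x = y"
  shows "matrix_inv A *v y = x"
proof -
  have "matrix_inv A ** A = mat 1"
    using assms(1) unfolding invertible_def matrix_inv_def by (metis (mono_tags, lifting) someI_ex)
  then show ?thesis
    using assms(2) by (metis matrix_vector_mul_assoc matrix_vector_mul_lid)
qed

lemma one_minus_beta':
  "1 - beta' \<beta> \<pi>O w s x = (1 - \<pi>O s w) * \<beta> w s x"
  unfolding beta'_def by (simp add: algebra_simps)

lemma adv'_eq: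
  "adv' \<beta> q v x s w = - \<beta> w s x * adv q v s w"
  unfolding adv'_def uval_def adv_def by (simp add: algebra_simps)

lemma GDERIV_beta':
  assumes "GDERIV (\<beta> w s) x :> D"
  shows "GDERIV (beta' \<beta> \<pi>O w s) x :> (\<pi>O s w - 1) *\<^sub>R D"
proof -
  have "beta' \<beta> \<pi>O w s = (\<lambda>y. 1 - (1 - \<pi>O s w) * \<beta> w s y)"
    unfolding beta'_def by (auto simp: algebra_simps)
  then show ?thesis
    using GDERIV_diff[OF GDERIV_const GDERIV_mult[OF GDERIV_const assms], of 1 "1 - \<pi>O s w"]
    by (simp add: algebra_simps)
qed

lemma grad_ln_beta':
  fixes \<beta> :: "'o \<Rightarrow> 's \<Rightarrow> 'a::euclidean_space \<Rightarrow> real"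
  assumes "\<beta> w s differentiable (at x)" and "0 < beta' \<beta> \<pi>O w s x"
  shows "grad (\<lambda>y. ln (beta' \<beta> \<pi>O w s y)) x
    = ((\<pi>O s w - 1) / beta' \<beta> \<pi>O w s x) *\<^sub>R grad (\<beta> w s) x"
  using grad_ln[OF GDERIV_beta'[where \<beta>=\<beta> and w=w and s=s and \<pi>O=\<pi>O, OF GDERIV_grad[OF assms(1)]] assms(2)]
  by (simp add: divide_inverse mult.commute)

lemma compatible_residual_eq:
  fixes \<beta> :: "'o \<Rightarrow> 's \<Rightarrow> real^'n \<Rightarrow> real"
  assumes diff: "\<beta> w s differentiable (at x)" and "0 \<le> \<beta> w s x"
    and pos: "0 < beta' \<beta> \<pi>O w s x" and ne1: "1 - beta' \<beta> \<pi>O w s x \<noteq> 0"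
  defines "g \<equiv> grad (\<lambda>y. ln (beta' \<beta> \<pi>O w s y)) x"
  shows "(Lw \<beta> \<pi>O w s x * (hcompat \<beta> \<pi>O \<phi> x w s - adv' \<beta> q v x s w)) *\<^sub>R g
    = - ((g \<bullet> \<phi>) *\<^sub>R grad (\<lambda>y. ln (\<beta> w s y)) x) - adv q v s w *\<^sub>R grad (\<beta> w s) x"
proof -
  have "(1 - \<pi>O s w) * \<beta> w s x \<noteq> 0"
    using ne1 by (simp add: one_minus_beta')
  then have "0 < \<beta> w s x" "\<pi>O s w \<noteq> 1"
    using \<open>0 \<le> \<beta> w s x\<close> by auto
  have L_factor: "Lw \<beta> \<pi>O w s x * ((\<pi>O s w - 1) / beta' \<beta> \<pi>O w s x) = - inverse (\<beta> w s x)"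
    using pos \<open>0 < \<beta> w s x\<close> \<open>\<pi>O s w \<noteq> 1\<close>
    unfolding Lw_def one_minus_beta' by (simp add: field_simps)
  have "(Lw \<beta> \<pi>O w s x * (hcompat \<beta> \<pi>O \<phi> x w s - adv' \<beta> q v x s w)) *\<^sub>R g
      = (Lw \<beta> \<pi>O w s x * (\<phi> \<bullet> g + \<beta> w s x * adv q v s w)) *\<^sub>R g"
    by (simp add: hcompat_def g_def adv'_eq)
  also have "\<dots> = (Lw \<beta> \<pi>O w s x * ((\<pi>O s w - 1) / beta' \<beta> \<pi>O w s x)
      * (\<phi> \<bullet> g + \<beta> w s x * adv q v s w)) *\<^sub>R grad (\<beta> w s) x"
    by (simp add: g_def grad_ln_beta'[OF diff pos] del: inner_scaleR_right)
  also have "\<dots> = - ((g \<bullet> \<phi>) *\<^sub>R grad (\<lambda>y. ln (\<beta> w s y)) x) - adv q v s w *\<^sub>R grad (\<beta> w s) x"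
    unfolding L_factor grad_ln[OF GDERIV_grad[OF diff] \<open>0 < \<beta> w s x\<close>]
    using \<open>0 < \<beta> w s x\<close> by (simp add: algebra_simps inner_commute)
  finally show ?thesis .
qed

lemma GDERIV_sqerr:
  "GDERIV (\<lambda>\<psi>. sqerr \<mu> \<beta> \<pi>O q v \<psi> x) \<phi> :> 2 *\<^sub>R
    (\<Sum>s\<in>UNIV. \<Sum>w\<in>UNIV. (\<mu> s w * Lw \<beta> \<pi>O w s x
       * (hcompat \<beta> \<pi>O \<phi> x w s - adv' \<beta> q v x s w)) *\<^sub>R grad (\<lambda>y. ln (beta' \<beta> \<pi>O w s y)) x)"
  unfolding sqerr_def hcompat_def scaleR_sum_right
  by (intro GDERIV_sum GDERIV_subst[OF GDERIV_weighted_square]) (simp add: algebra_simps)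

lemma Gmat_mult_vec:
  "Gmat \<mu> \<beta> \<pi>O x *v \<phi> = - (\<Sum>s\<in>UNIV. \<Sum>w\<in>UNIV.
     (\<mu> s w * (grad (\<lambda>y. ln (beta' \<beta> \<pi>O w s y)) x \<bullet> \<phi>)) *\<^sub>R grad (\<lambda>y. ln (\<beta> w s y)) x)"
  by (simp add: Gmat_def matrix_vector_mult_neg_left matrix_vector_mult_sum_left outer_matrix_vector_mult)

theorem mainTheorem6:
  fixes \<beta> :: "'o::finite \<Rightarrow> 's::finite \<Rightarrow> real^'n \<Rightarrow> real"
    and \<pi>O :: "'s \<Rightarrow> 'o \<Rightarrow> real"
    and \<mu> :: "'s \<Rightarrow> 'o \<Rightarrow> real"
    and q :: "'s \<Rightarrow> 'o \<Rightarrow> real" and v :: "'s \<Rightarrow> real"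
    and U :: "real^'n \<Rightarrow> real"
    and \<theta> \<phi> :: "real^'n"
  assumes beta_prob: "\<And>w s y. 0 \<le> \<beta> w s y \<and> \<beta> w s y \<le> 1"
    and beta_diff: "\<And>w s y. \<beta> w s differentiable (at y)"
    and piO_prob: "\<And>s w. 0 \<le> \<pi>O s w" "\<And>s. (\<Sum>w\<in>UNIV. \<pi>O s w) = 1"
    and mu_nonneg: "\<And>s w. 0 \<le> \<mu> s w"
    and beta'_pos: "\<And>w s. 0 < beta' \<beta> \<pi>O w s \<theta>"
    and beta'_ne1: "\<And>w s. 1 - beta' \<beta> \<pi>O w s \<theta> \<noteq> 0"
    and term_grad: "GDERIV U \<theta> :> - (\<Sum>s\<in>UNIV. \<Sum>w\<in>UNIV. (\<mu> s w * adv q v s w) *\<^sub>R grad (\<beta> w s) \<theta>)"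
    and G_inv: "invertible (Gmat \<mu> \<beta> \<pi>O \<theta>)"
    and locmin: "\<exists>e>0. \<forall>\<psi>. dist \<psi> \<phi> < e \<longrightarrow> sqerr \<mu> \<beta> \<pi>O q v \<phi> \<theta> \<le> sqerr \<mu> \<beta> \<pi>O q v \<psi> \<theta>"
  shows "matrix_inv (Gmat \<mu> \<beta> \<pi>O \<theta>) *v grad U \<theta> = - \<phi>"
proof -
  define g where "g w s = grad (\<lambda>y. ln (beta' \<beta> \<pi>O w s y)) \<theta>" for w s
  define r where "r s w = \<mu> s w * Lw \<beta> \<pi>O w s \<theta> * (hcompat \<beta> \<pi>O \<phi> \<theta> w s - adv' \<beta> q v \<theta> s w)" for s w
  have normal_eq: "(\<Sum>s\<in>UNIV. \<Sum>w\<in>UNIV. r s w *\<^sub>R g w s) = 0"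
    using GDERIV_local_min_eq_0[OF GDERIV_sqerr locmin] unfolding r_def g_def by simp
  have residual: "r s w *\<^sub>R g w s = - ((\<mu> s w * (g w s \<bullet> \<phi>)) *\<^sub>R grad (\<lambda>y. ln (\<beta> w s y)) \<theta>)
      - (\<mu> s w * adv q v s w) *\<^sub>R grad (\<beta> w s) \<theta>" for s w
    using compatible_residual_eq[OF beta_diff _ beta'_pos beta'_ne1, of w s \<phi> q v] beta_prob
    unfolding r_def g_def by (simp add: scaleR_diff_right flip: scaleR_scaleR)
  have "Gmat \<mu> \<beta> \<pi>O \<theta> *v \<phi> + grad U \<theta> = (\<Sum>s\<in>UNIV. \<Sum>w\<in>UNIV. r s w *\<^sub>R g w s)"
    unfolding Gmat_mult_vec grad_eqI[OF term_grad] g_def[symmetric] residual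
    by (simp add: sum_subtractf sum_negf)
  then have "grad U \<theta> = - (Gmat \<mu> \<beta> \<pi>O \<theta> *v \<phi>)"
    using normal_eq by (simp add: eq_neg_iff_add_eq_0 add.commute)
  also have "\<dots> = Gmat \<mu> \<beta> \<pi>O \<theta> *v (- \<phi>)"
    by (metis scaleR_minus1_left matrix_vector_mult_scaleR)
  finally show ?thesis
    using matrix_inv_mult_vec_eqI[OF G_inv] by metis
qed

end
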